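(* Every rooted tree has a good hyperbolic drawing.
   Context: Work in the hyperbolic plane (e.g. the Poincaré disk model), with its circle at infinity. A drawing of a rooted tree $T$ in the hyperbolic plane places each non-leaf vertex at a point of the hyperbolic plane and each leaf at a point of the circle at infinity, and draws each edge as a hyperbolic straight line segment (between two non-leaf vertices) or ray (from a non-leaf vertex to a leaf). For a non-root vertex $v$ with parent $u$, partition the hyperbolic plane into wedges bounded by the bisectors of the angles formed at $u$ by consecutive edges from $u$ (equivalently, take the Voronoi diagram generated by the rays from $u$ to its children); the dominance region of $v$ is the wedge containing $v$. A good hyperbolic drawing of $T$ is such a drawing in which, for any two non-root vertices $v$ and $w$, their dominance regions are nested (one contained in the other) if one of $v,w$ is an ancestor of the other, and disjoint otherwise. *)

theory Defs
  imports Complex_Main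
begin

(* Rooted trees: finite vertex set V, root r, parent function par.
   Every vertex reaches the root by iterating par; par r is irrelevant. *)
definition rooted_tree :: "'a set \<Rightarrow> ('a \<Rightarrow> 'a) \<Rightarrow> 'a \<Rightarrow> bool" where
  "rooted_tree V par r \<longleftrightarrow> finite V \<and> r \<in> V \<and>
     (\<forall>v \<in> V - {r}. par v \<in> V) \<and>
     (\<forall>v \<in> V. \<exists>k. (par ^^ k) v = r)"

definition children :: "'a set \<Rightarrow> ('a \<Rightarrow> 'a) \<Rightarrow> 'a \<Rightarrow> 'a \<Rightarrow> 'a set" where
  "children V par r u = {v \<in> V - {r}. par v = u}"

definition is_leaf :: "'a set \<Rightarrow> ('a \<Rightarrow> 'a) \<Rightarrow> 'a \<Rightarrow> 'a \<Rightarrow> bool" where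
  "is_leaf V par r v \<longleftrightarrow> v \<in> V \<and> children V par r v = {}"

definition ancestor :: "('a \<Rightarrow> 'a) \<Rightarrow> 'a \<Rightarrow> 'a \<Rightarrow> 'a \<Rightarrow> bool" where
  "ancestor par r w v \<longleftrightarrow> (\<exists>k>0. (par ^^ k) v = w \<and> (\<forall>j<k. (par ^^ j) v \<noteq> r))"

definition nbrs :: "'a set \<Rightarrow> ('a \<Rightarrow> 'a) \<Rightarrow> 'a \<Rightarrow> 'a \<Rightarrow> 'a set" where
  "nbrs V par r u = children V par r u \<union> (if u = r then {} else {par u})"

(* Poincare disk model: hyperbolic plane = open unit disk, circle at infinity = unit circle.
   The Moebius isometry moving u to 0; it maps geodesics through u to diameters and is conformal. *)
definition moeb :: "complex \<Rightarrow> complex \<Rightarrow> complex" where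
  "moeb u z = (z - u) / (1 - cnj u * z)"

definition vangle :: "complex \<Rightarrow> complex \<Rightarrow> real" where
  "vangle a b = arccos (Re (a * cnj b) / (cmod a * cmod b))"

(* hyperbolic angle at u (in the disk) between the geodesic rays/segments from u to p and to q *)
definition hangle :: "complex \<Rightarrow> complex \<Rightarrow> complex \<Rightarrow> real" where
  "hangle u p q = vangle (moeb u p) (moeb u q)"

(* A drawing: non-leaf vertices in the open disk, leaves on the unit circle; edges are then the
   unique geodesic segments/rays.  The wedge of each edge must be well defined, i.e. every edge
   from a vertex u leaves u in a direction different from all other edges at u. *)
definition hyp_drawing :: "'a set \<Rightarrow> ('a \<Rightarrow> 'a) \<Rightarrow> 'a \<Rightarrow> ('a \<Rightarrow> complex) \<Rightarrow> bool" where
  "hyp_drawing V par r pos \<longleftrightarrow>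
     (\<forall>v \<in> V. if is_leaf V par r v then cmod (pos v) = 1 else cmod (pos v) < 1) \<and>
     (\<forall>v \<in> V - {r}. pos v \<noteq> pos (par v) \<and>
        (\<forall>n \<in> nbrs V par r (par v) - {v}. hangle (pos (par v)) (pos v) (pos n) > 0))"

(* dominance region of a non-root vertex v with parent u: the open wedge at u, bounded by the
   bisectors of consecutive edges at u, which contains the edge uv *)
definition dom_region :: "'a set \<Rightarrow> ('a \<Rightarrow> 'a) \<Rightarrow> 'a \<Rightarrow> ('a \<Rightarrow> complex) \<Rightarrow> 'a \<Rightarrow> complex set" where
  "dom_region V par r pos v =
     {p. cmod p < 1 \<and> p \<noteq> pos (par v) \<and>
         (\<forall>n \<in> nbrs V par r (par v) - {v}.
            hangle (pos (par v)) p (pos v) < hangle (pos (par v)) p (pos n))}"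

definition good_hyp_drawing :: "'a set \<Rightarrow> ('a \<Rightarrow> 'a) \<Rightarrow> 'a \<Rightarrow> ('a \<Rightarrow> complex) \<Rightarrow> bool" where
  "good_hyp_drawing V par r pos \<longleftrightarrow> hyp_drawing V par r pos \<and>
     (\<forall>v \<in> V - {r}. \<forall>w \<in> V - {r}. v \<noteq> w \<longrightarrow>
        (if ancestor par r v w \<or> ancestor par r w v
         then dom_region V par r pos v \<subseteq> dom_region V par r pos w \<or>
              dom_region V par r pos w \<subseteq> dom_region V par r pos v
         else dom_region V par r pos v \<inter> dom_region V par r pos w = {}))"

end

theory Submission
  imports Defs
begin

text \<open>Give the vertices distinct angles in \<open>[-pi/4, pi/4)\<close>. In the frame of a non-leaf vertex \<open>u\<close>
  (a disk isometry sending \<open>u\<close> to \<open>0\<close> and its parent to the direction \<open>-1\<close>) every child \<open>v\<close>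
  is placed at radius \<open>rho\<close> in the direction of its angle, or on the circle at infinity if it is
  a leaf. Seen from \<open>v\<close>, the dominance region of a child of \<open>v\<close> stays away from the parent
  direction \<open>-1\<close>; passing to the frame of \<open>u\<close> is a hyperbolic translation by \<open>rho\<close> towards
  \<open>v\<close>, which for \<open>rho\<close> close to \<open>1\<close> squeezes that region into the wedge of \<open>v\<close>. So regions
  nest along ancestor chains. Regions of siblings are distinct wedges at their common parent,
  and two unrelated vertices are separated by climbing from the deeper one until both are
  siblings.\<close>

lemma unit_mult_cnj: "cmod w = 1 \<Longrightarrow> w * cnj w = 1"
  by (metis complex_norm_square of_real_1 power_one)

lemma moeb_denom_nonzero:
  assumes "cmod b < 1" "cmod z \<le> 1"
  shows "1 - cnj b * z \<noteq> 0"
proof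
  assume "1 - cnj b * z = 0"
  hence "cmod b * cmod z = 1" by (metis complex_mod_cnj norm_mult norm_one right_minus_eq)
  moreover have "cmod b * cmod z < 1"
    using assms by (smt (verit) mult_left_le norm_ge_zero)
  ultimately show False by simp
qed

lemma moeb_norm_identity:
  "(cmod (1 - cnj b * z))\<^sup>2 - (cmod (z - b))\<^sup>2 = (1 - (cmod b)\<^sup>2) * (1 - (cmod z)\<^sup>2)"
  unfolding cmod_power2 by (simp add: power2_eq_square) algebra

lemma norm_moeb_less_1:
  assumes "cmod b < 1" "cmod z < 1"
  shows "cmod (moeb b z) < 1"
proof -
  have "(1 - (cmod b)\<^sup>2) * (1 - (cmod z)\<^sup>2) > 0"
    using assms by (simp add: abs_square_less_1)
  hence "(cmod (z - b))\<^sup>2 < (cmod (1 - cnj b * z))\<^sup>2"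
    using moeb_norm_identity[of b z] by linarith
  hence "cmod (z - b) < cmod (1 - cnj b * z)"
    using power2_less_imp_less by fastforce
  thus ?thesis
    using moeb_denom_nonzero[of b z] assms by (simp add: moeb_def norm_divide divide_less_eq)
qed

lemma norm_moeb_eq_1:
  assumes "cmod b < 1" "cmod z = 1"
  shows "cmod (moeb b z) = 1"
proof -
  have "(cmod (z - b))\<^sup>2 = (cmod (1 - cnj b * z))\<^sup>2"
    using moeb_norm_identity[of b z] assms by simp
  hence "cmod (z - b) = cmod (1 - cnj b * z)" by simp
  thus ?thesis
    using moeb_denom_nonzero[of b z] assms by (simp add: moeb_def norm_divide)
qed

lemma norm_moeb_le_1: "cmod b < 1 \<Longrightarrow> cmod z \<le> 1 \<Longrightarrow> cmod (moeb b z) \<le> 1"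
  using norm_moeb_less_1 norm_moeb_eq_1 by (metis less_eq_real_def)

lemma moeb_neg_moeb:
  assumes "cmod b < 1" "cmod z \<le> 1"
  shows "moeb (-b) (moeb b z) = z"
proof -
  have d: "1 - cnj b * z \<noteq> 0" using assms moeb_denom_nonzero by auto
  have e: "1 - cnj b * b \<noteq> 0" using moeb_denom_nonzero[of b b] assms by simp
  have num: "(z - b) / (1 - cnj b * z) + b = z * (1 - cnj b * b) / (1 - cnj b * z)"
    using d by (simp add: field_simps)
  have den: "1 + cnj b * ((z - b) / (1 - cnj b * z)) = (1 - cnj b * b) / (1 - cnj b * z)"
    using d by (simp add: field_simps)
  show ?thesis
    unfolding moeb_def using num den d e by simp
qed

lemma moeb_moeb_neg: "cmod b < 1 \<Longrightarrow> cmod z \<le> 1 \<Longrightarrow> moeb b (moeb (-b) z) = z"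
  using moeb_neg_moeb[of "-b" z] by simp

lemma rotated_moeb_compose_eq:
  assumes w: "w * cnj w = 1" and lam: "w + a * cnj b \<noteq> 0" and mu: "1 + cnj a * w * b \<noteq> 0"
    and z: "1 - cnj b * z \<noteq> 0"
  defines "b' \<equiv> (w * b + a) / (w + a * cnj b)"
  shows "moeb a (w * moeb b z) = (w + a * cnj b) / (1 + cnj a * w * b) * moeb b' z"
proof -
  have "w \<noteq> 0" using w by auto
  have "cnj b' = (cnj w * cnj b + cnj a) / (cnj w + cnj a * b)" unfolding b'_def by simp
  also have "\<dots> = (w * (cnj w * cnj b + cnj a)) / (w * (cnj w + cnj a * b))" using \<open>w \<noteq> 0\<close> by simp
  also have "w * (cnj w * cnj b + cnj a) = cnj b + cnj a * w" using w by algebra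
  also have "w * (cnj w + cnj a * b) = 1 + cnj a * w * b" using w by algebra
  finally have cnj_b': "cnj b' = (cnj b + cnj a * w) / (1 + cnj a * w * b)" .
  define D where "D = 1 - cnj b * z"
  define Num where "Num = (w + a * cnj b) * z - (w * b + a)"
  define Den where "Den = (1 + cnj a * w * b) - (cnj b + cnj a * w) * z"
  have "D \<noteq> 0" using z D_def by simp
  have e1: "w * ((z - b) / D) - a = (w * (z - b) - a * D) / D"
    using \<open>D \<noteq> 0\<close> by (simp add: field_simps)
  have e2: "1 - cnj a * (w * ((z - b) / D)) = (D - cnj a * w * (z - b)) / D"
    using \<open>D \<noteq> 0\<close> by (simp add: field_simps)
  have "moeb a (w * moeb b z) = (w * ((z - b) / D) - a) / (1 - cnj a * (w * ((z - b) / D)))"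
    by (simp add: moeb_def D_def)
  also have "\<dots> = (w * (z - b) - a * D) / (D - cnj a * w * (z - b))"
    unfolding e1 e2 using \<open>D \<noteq> 0\<close> by simp
  also have "w * (z - b) - a * D = Num" unfolding Num_def D_def by algebra
  also have "D - cnj a * w * (z - b) = Den" unfolding Den_def D_def by algebra
  finally have lhs: "moeb a (w * moeb b z) = Num / Den" .
  have "(w + a * cnj b) / (1 + cnj a * w * b) * moeb b' z
      = ((w + a * cnj b) * (z - b')) / ((1 + cnj a * w * b) * (1 - cnj b' * z))"
    unfolding moeb_def by simp
  also have "(w + a * cnj b) * (z - b') = Num"
    unfolding Num_def b'_def using lam by (simp add: right_diff_distrib)
  also have "(1 + cnj a * w * b) * (1 - cnj b' * z) = Den"
    unfolding Den_def cnj_b' using mu by (simp add: right_diff_distrib)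
  finally show ?thesis using lhs by simp
qed

lemma rotated_moeb_compose:
  assumes a: "cmod a < 1" and b: "cmod b < 1" and w: "cmod w = 1"
  obtains Om b' where "cmod Om = 1" "cmod b' < 1"
    "\<And>z. cmod z \<le> 1 \<Longrightarrow> moeb a (w * moeb b z) = Om * moeb b' z"
proof -
  have ww: "w * cnj w = 1" using unit_mult_cnj w by blast
  have "w \<noteq> 0" using w by auto
  have wa: "cmod (cnj w * a) < 1" using a w by (simp add: norm_mult)
  have d: "1 + cnj b * (cnj w * a) \<noteq> 0"
    using moeb_denom_nonzero[of "-b" "cnj w * a"] wa b by simp
  have lam: "w + a * cnj b \<noteq> 0"
  proof
    assume "w + a * cnj b = 0"
    moreover have "cnj w * (w + a * cnj b) = 1 + cnj b * (cnj w * a)" using ww by algebra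
    ultimately show False using d by simp
  qed
  have mu: "1 + cnj a * w * b \<noteq> 0"
    using moeb_denom_nonzero[of a "- (w * b)"] a b w by (simp add: norm_mult algebra_simps)
  have lam_eq: "w + a * cnj b = w * cnj (1 + cnj a * w * b)" using ww by simp algebra
  have "cmod ((w + a * cnj b) / (1 + cnj a * w * b)) = 1"
    unfolding lam_eq norm_divide norm_mult complex_mod_cnj using mu w by simp
  moreover have "(w * b + a) / (w + a * cnj b) = moeb (-b) (cnj w * a)"
  proof -
    have "moeb (-b) (cnj w * a) = (w * (cnj w * a + b)) / (w * (1 + cnj b * (cnj w * a)))"
      using \<open>w \<noteq> 0\<close> by (simp add: moeb_def)
    also have "w * (cnj w * a + b) = w * b + a" using ww by algebra
    also have "w * (1 + cnj b * (cnj w * a)) = w + a * cnj b" using ww by algebra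
    finally show ?thesis by simp
  qed
  hence "cmod ((w * b + a) / (w + a * cnj b)) < 1"
    using norm_moeb_less_1[of "-b" "cnj w * a"] wa b by simp
  moreover have "1 - cnj b * z \<noteq> 0" if "cmod z \<le> 1" for z
    using moeb_denom_nonzero b that by blast
  ultimately show ?thesis
    using that rotated_moeb_compose_eq[OF ww lam mu] by blast
qed

lemma vangle_mult_unit: "cmod w = 1 \<Longrightarrow> vangle (w * x) (w * y) = vangle x y"
proof -
  assume w: "cmod w = 1"
  have "w * x * cnj (w * y) = (w * cnj w) * (x * cnj y)" by simp
  also have "\<dots> = x * cnj y" using unit_mult_cnj[OF w] by simp
  finally have e: "w * x * cnj (w * y) = x * cnj y" .
  show ?thesis unfolding vangle_def e norm_mult w by simp
qed

lemma vangle_scale_left: "s > 0 \<Longrightarrow> vangle (complex_of_real s * x) y = vangle x y"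
proof -
  assume s: "s > 0"
  have "Re (complex_of_real s * x * cnj y) = s * Re (x * cnj y)" by (simp add: algebra_simps)
  thus ?thesis using s by (simp add: vangle_def norm_mult)
qed

lemma vangle_scale_right: "s > 0 \<Longrightarrow> vangle x (complex_of_real s * y) = vangle x y"
proof -
  assume s: "s > 0"
  have "Re (x * cnj (complex_of_real s * y)) = s * Re (x * cnj y)" by (simp add: algebra_simps)
  thus ?thesis using s by (simp add: vangle_def norm_mult)
qed

lemma abs_Re_mult_cnj_unit_le: "cmod e = 1 \<Longrightarrow> \<bar>Re (x * cnj e) / cmod x\<bar> \<le> 1"
proof (cases "x = 0")
  case False
  assume e: "cmod e = 1"
  have "\<bar>Re (x * cnj e)\<bar> \<le> cmod x"
    using abs_Re_le_cmod[of "x * cnj e"] e by (simp add: norm_mult)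
  thus ?thesis using False by simp
qed simp

lemma vangle_less_iff:
  assumes "x \<noteq> 0" "cmod e1 = 1" "cmod e2 = 1"
  shows "vangle x e1 < vangle x e2 \<longleftrightarrow> Re (x * cnj e2) < Re (x * cnj e1)"
proof -
  have "vangle x e1 < vangle x e2 \<longleftrightarrow> Re (x * cnj e2) / cmod x < Re (x * cnj e1) / cmod x"
    unfolding vangle_def assms(2,3) mult_1_right
    using abs_Re_mult_cnj_unit_le assms(2,3) by (intro arccos_less_mono) auto
  also have "\<dots> \<longleftrightarrow> Re (x * cnj e2) < Re (x * cnj e1)"
    using assms by (simp add: divide_less_cancel)
  finally show ?thesis .
qed

lemma vangle_pos:
  assumes "cmod e1 = 1" "cmod e2 = 1" "Re (e1 * cnj e2) < 1"
  shows "vangle e1 e2 > 0"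
proof -
  have "e1 * cnj e1 = 1" using unit_mult_cnj[OF assms(1)] .
  hence "vangle e1 e1 = 0" using assms(1) by (simp add: vangle_def)
  moreover have "vangle e1 e1 < vangle e1 e2"
    using vangle_less_iff[of e1 e1 e2] assms \<open>e1 * cnj e1 = 1\<close> by fastforce
  ultimately show ?thesis by simp
qed

lemma norm_one_plus_gt_half:
  assumes e: "cmod e = 1" "Re e \<ge> 0" and z: "Re (z * (cnj e + 1)) > 0"
  shows "cmod (1 + z) > 1/2"
proof -
  have "Re ((1 + z) * (cnj e + 1)) = Re (cnj e + 1) + Re (z * (cnj e + 1))"
    by (simp add: algebra_simps)
  hence "1 < Re ((1 + z) * (cnj e + 1))" using e z by simp
  also have "\<dots> \<le> cmod (1 + z) * cmod (cnj e + 1)"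
    using complex_Re_le_cmod by (metis norm_mult)
  also have "\<dots> \<le> cmod (1 + z) * 2"
    using norm_triangle_ineq[of "cnj e" 1] e by (intro mult_left_mono) auto
  finally show ?thesis by simp
qed

lemma translation_estimate_real:
  fixes x y T k p q :: real
  assumes T: "T = 1 - k/32" "0 < k" "k \<le> 1"
    and xy: "\<bar>x\<bar> < 1" "\<bar>y\<bar> < 1" "(1 + x)\<^sup>2 + y\<^sup>2 > 1/4"
  shows "T * ((1 + x)\<^sup>2 + y\<^sup>2) + (1 - T)\<^sup>2 * x > 1/8"
    and "\<bar>q\<bar> \<le> 1 \<Longrightarrow> 1 - p \<ge> k \<Longrightarrow>
      (T * ((1 + x)\<^sup>2 + y\<^sup>2) + (1 - T)\<^sup>2 * x) * (1 - p) - y * (1 - T\<^sup>2) * q > 0"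
proof -
  have T1: "T \<ge> 31/32" "T < 1" using T by auto
  have "T * ((1 + x)\<^sup>2 + y\<^sup>2) \<ge> T * (1/4)" using xy T1 by (intro mult_left_mono) auto
  moreover have "(1 - T)\<^sup>2 \<le> (1/32)\<^sup>2" using T1 by (intro power_mono) auto
  moreover have "(1 - T)\<^sup>2 * x \<ge> - ((1 - T)\<^sup>2)"
    using mult_left_mono[of "-1" x "(1 - T)\<^sup>2"] xy by simp
  ultimately show R: "T * ((1 + x)\<^sup>2 + y\<^sup>2) + (1 - T)\<^sup>2 * x > 1/8"
    using T1 by (simp only: power2_eq_square)
  assume pq: "\<bar>q\<bar> \<le> 1" "1 - p \<ge> k"
  define R where "R = T * ((1 + x)\<^sup>2 + y\<^sup>2) + (1 - T)\<^sup>2 * x"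
  have "R * (1 - p) \<ge> (1/8) * k"
    using R pq T mult_mono[of "1/8" R k "1 - p"] unfolding R_def by auto
  moreover have "\<bar>y * (1 - T\<^sup>2) * q\<bar> \<le> k/16"
  proof -
    have "1 - T\<^sup>2 = (1 - T) * (1 + T)" by (simp add: power2_eq_square algebra_simps)
    moreover have "(1 - T) * (1 + T) \<le> (1 - T) * 2" using T1 by (intro mult_left_mono) auto
    moreover have "0 \<le> (1 - T) * (1 + T)" "(1 - T) * 2 = k/16" using T1 T by auto
    ultimately have T2: "0 \<le> 1 - T\<^sup>2" "1 - T\<^sup>2 \<le> k/16" by linarith+
    have "\<bar>y * (1 - T\<^sup>2) * q\<bar> = \<bar>y\<bar> * (1 - T\<^sup>2) * \<bar>q\<bar>" using T2 by (simp add: abs_mult)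
    also have "\<dots> \<le> 1 * (1 - T\<^sup>2) * 1" using xy pq T2 by (intro mult_mono) auto
    finally show ?thesis using T2 by simp
  qed
  ultimately show "R * (1 - p) - y * (1 - T\<^sup>2) * q > 0"
    using T by (simp add: abs_le_iff)
qed

text \<open>Points away from \<open>-1\<close> are squeezed towards the direction \<open>1\<close> by the hyperbolic translation
  \<open>z \<mapsto> (z + T) / (1 + T z)\<close>: writing its value as \<open>Q / \<bar>1 + T z\<bar>\<^sup>2\<close>, one has
  \<open>Re Q = T \<bar>1 + z\<bar>\<^sup>2 + (1 - T)\<^sup>2 Re z\<close> while \<open>Im Q = (1 - T\<^sup>2) Im z\<close> is small.
  So for \<open>T\<close> close to \<open>1\<close> the image makes a smaller angle with \<open>1\<close> than with any unit vector \<open>f\<close>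
  at angular distance at least \<open>k\<close> (measured by \<open>1 - Re f\<close>).\<close>

lemma translation_estimate:
  fixes T k :: real
  assumes T: "T = 1 - k/32" "0 < k" "k \<le> 1"
    and z: "cmod z < 1" "cmod (1 + z) > 1/2"
  shows "Re ((z + of_real T) / (1 + of_real T * z)) > 0"
    and "cmod f = 1 \<Longrightarrow> 1 - Re f \<ge> k \<Longrightarrow>
      Re ((z + of_real T) / (1 + of_real T * z) * (1 - cnj f)) > 0"
proof -
  have "(cmod (1 + z))\<^sup>2 > (1/2)\<^sup>2" using z by (intro power_strict_mono) auto
  hence xy: "(1 + Re z)\<^sup>2 + (Im z)\<^sup>2 > 1/4" unfolding cmod_power2 by (simp add: power_divide)
  have re_im: "\<bar>Re z\<bar> < 1" "\<bar>Im z\<bar> < 1"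
    using z abs_Re_le_cmod abs_Im_le_cmod le_less_trans by blast+
  note est = translation_estimate_real[OF T re_im xy]
  have "T < 1" "T > 0" using T by auto
  have "T * cmod z \<le> cmod z" using \<open>T < 1\<close> \<open>T > 0\<close> by (intro mult_left_le_one_le) auto
  hence "cmod (of_real T * z) < 1" using z \<open>T > 0\<close> by (simp add: norm_mult)
  hence "1 + of_real T * z \<noteq> 0" by (metis add_eq_0_iff norm_minus_cancel norm_one order.irrefl)
  define D where "D = (cmod (1 + of_real T * z))\<^sup>2"
  have D: "D > 0" using \<open>1 + of_real T * z \<noteq> 0\<close> D_def by simp
  define Q where "Q = (z + of_real T) * cnj (1 + of_real T * z)"
  have W: "(z + of_real T) / (1 + of_real T * z) = Q / of_real D"
    unfolding Q_def D_def by (rule complex_div_cnj)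
  have ReQ: "Re Q = T * ((1 + Re z)\<^sup>2 + (Im z)\<^sup>2) + (1 - T)\<^sup>2 * Re z"
    unfolding Q_def by (simp add: power2_eq_square algebra_simps)
  have ImQ: "Im Q = Im z * (1 - T\<^sup>2)"
    unfolding Q_def by (simp add: power2_eq_square algebra_simps)
  show "Re ((z + of_real T) / (1 + of_real T * z)) > 0"
    unfolding W using D est(1) ReQ by simp
  assume f: "cmod f = 1" "1 - Re f \<ge> k"
  have "\<bar>Im f\<bar> \<le> 1" using abs_Im_le_cmod[of f] f by simp
  moreover have "Re (Q * (1 - cnj f)) = Re Q * (1 - Re f) - Im Q * Im f" by (simp add: algebra_simps)
  ultimately have "Re (Q * (1 - cnj f)) > 0" using est(2) f(2) ReQ ImQ by (simp add: mult.assoc)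
  moreover have "Q / of_real D * (1 - cnj f) = (Q * (1 - cnj f)) / of_real D" by simp
  ultimately show "Re ((z + of_real T) / (1 + of_real T * z) * (1 - cnj f)) > 0"
    unfolding W using D by simp
qed

text \<open>Both maps are only pinned down on the closed disk, so that frames can be built by composing
  functions.\<close>

definition disk_automorphism :: "(complex \<Rightarrow> complex) \<Rightarrow> (complex \<Rightarrow> complex) \<Rightarrow> bool" where
  "disk_automorphism f g \<longleftrightarrow> (\<exists>Om B. cmod Om = 1 \<and> cmod B < 1 \<and>
     (\<forall>z. cmod z \<le> 1 \<longrightarrow> f z = Om * moeb B z) \<and>
     (\<forall>w. cmod w \<le> 1 \<longrightarrow> g w = moeb (-B) (cnj Om * w)))"

lemma disk_automorphismE:
  assumes "disk_automorphism f g"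
  obtains Om B where "cmod Om = 1" "cmod B < 1"
    "\<And>z. cmod z \<le> 1 \<Longrightarrow> f z = Om * moeb B z"
    "\<And>w. cmod w \<le> 1 \<Longrightarrow> g w = moeb (-B) (cnj Om * w)"
  using assms unfolding disk_automorphism_def by blast

lemma disk_automorphismI:
  assumes Om: "cmod Om = 1" and B: "cmod B < 1"
    and f: "\<And>z. cmod z \<le> 1 \<Longrightarrow> f z = Om * moeb B z"
    and g: "\<And>w. cmod w \<le> 1 \<Longrightarrow> cmod (g w) \<le> 1"
    and fg: "\<And>w. cmod w \<le> 1 \<Longrightarrow> f (g w) = w"
  shows "disk_automorphism f g"
proof -
  have "g w = moeb (-B) (cnj Om * w)" if w: "cmod w \<le> 1" for w
  proof -
    have "Om * moeb B (g w) = Om * (cnj Om * w)"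
      using f[OF g[OF w]] fg[OF w] unit_mult_cnj[OF Om] by (simp add: mult.assoc[symmetric])
    hence "moeb B (g w) = cnj Om * w" using Om by auto
    thus ?thesis using moeb_neg_moeb[OF B g[OF w]] by simp
  qed
  thus ?thesis unfolding disk_automorphism_def using Om B f by blast
qed

lemma disk_automorphism_id: "disk_automorphism id id"
  by (rule disk_automorphismI[of 1 0]) (auto simp: moeb_def)

context
  fixes f g assumes aut: "disk_automorphism f g"
begin

lemma disk_aut_inv_norm_le: "cmod w \<le> 1 \<Longrightarrow> cmod (g w) \<le> 1"
  and disk_aut_inv_norm_less: "cmod w < 1 \<Longrightarrow> cmod (g w) < 1"
  and disk_aut_inv_norm_eq: "cmod w = 1 \<Longrightarrow> cmod (g w) = 1"
  and disk_aut_norm_le: "cmod z \<le> 1 \<Longrightarrow> cmod (f z) \<le> 1"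
  and disk_aut_norm_less: "cmod z < 1 \<Longrightarrow> cmod (f z) < 1"
  using aut by (elim disk_automorphismE;
      simp add: norm_mult norm_moeb_le_1 norm_moeb_less_1 norm_moeb_eq_1)+

lemma disk_aut_right_inverse: "cmod w \<le> 1 \<Longrightarrow> f (g w) = w"
proof -
  assume w: "cmod w \<le> 1"
  obtain Om B where Om: "cmod Om = 1" and B: "cmod B < 1"
    and f: "\<And>z. cmod z \<le> 1 \<Longrightarrow> f z = Om * moeb B z"
    and g: "\<And>w. cmod w \<le> 1 \<Longrightarrow> g w = moeb (-B) (cnj Om * w)"
    by (rule disk_automorphismE[OF aut]) blast
  have "cmod (cnj Om * w) \<le> 1" using w Om by (simp add: norm_mult)
  hence "f (g w) = Om * (cnj Om * w)"
    using f[OF disk_aut_inv_norm_le[OF w]] g[OF w] moeb_moeb_neg[OF B] by simp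
  thus ?thesis using unit_mult_cnj[OF Om] by (simp add: mult.assoc[symmetric])
qed

lemma disk_aut_left_inverse: "cmod z \<le> 1 \<Longrightarrow> g (f z) = z"
proof -
  assume z: "cmod z \<le> 1"
  obtain Om B where Om: "cmod Om = 1" and B: "cmod B < 1"
    and f: "\<And>z. cmod z \<le> 1 \<Longrightarrow> f z = Om * moeb B z"
    and g: "\<And>w. cmod w \<le> 1 \<Longrightarrow> g w = moeb (-B) (cnj Om * w)"
    by (rule disk_automorphismE[OF aut]) blast
  have "g (f z) = moeb (-B) (cnj Om * (Om * moeb B z))"
    using f[OF z] g[OF disk_aut_norm_le[OF z]] by simp
  also have "cnj Om * (Om * moeb B z) = moeb B z"
    using unit_mult_cnj[OF Om] by (simp add: mult.assoc[symmetric] mult.commute[of "cnj Om"])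
  finally show ?thesis using moeb_neg_moeb[OF B z] by simp
qed

lemma disk_aut_eq_0_iff: "cmod z \<le> 1 \<Longrightarrow> f z = 0 \<longleftrightarrow> z = g 0"
  using disk_aut_left_inverse disk_aut_right_inverse[of 0] by force

lemma disk_aut_hangle:
  "cmod p \<le> 1 \<Longrightarrow> cmod q \<le> 1 \<Longrightarrow> hangle (g 0) p q = vangle (f p) (f q)"
proof -
  assume p: "cmod p \<le> 1" and q: "cmod q \<le> 1"
  obtain Om B where Om: "cmod Om = 1"
    and f: "\<And>z. cmod z \<le> 1 \<Longrightarrow> f z = Om * moeb B z"
    and g: "\<And>w. cmod w \<le> 1 \<Longrightarrow> g w = moeb (-B) (cnj Om * w)"
    by (rule disk_automorphismE[OF aut]) blast
  have "g 0 = B" using g[of 0] by (simp add: moeb_def)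
  thus ?thesis unfolding hangle_def f[OF p] f[OF q] vangle_mult_unit[OF Om] by simp
qed

lemma disk_automorphism_compose:
  assumes a: "cmod a < 1" and eta: "cmod eta = 1"
  shows "disk_automorphism (\<lambda>z. eta * moeb a (f z)) (\<lambda>w. g (moeb (-a) (cnj eta * w)))"
proof -
  obtain Om B where Om: "cmod Om = 1" and B: "cmod B < 1"
    and f: "\<And>z. cmod z \<le> 1 \<Longrightarrow> f z = Om * moeb B z"
    by (rule disk_automorphismE[OF aut]) blast
  obtain Om' B' where Om': "cmod Om' = 1" and B': "cmod B' < 1"
    and comp: "\<And>z. cmod z \<le> 1 \<Longrightarrow> moeb a (Om * moeb B z) = Om' * moeb B' z"
    using rotated_moeb_compose[OF a B Om] by blast
  have rot: "cmod (cnj eta * w) \<le> 1" if "cmod w \<le> 1" for w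
    using that eta by (simp add: norm_mult)
  show ?thesis
  proof (rule disk_automorphismI[of "eta * Om'" B'])
    fix w :: complex assume w: "cmod w \<le> 1"
    have x: "cmod (moeb (-a) (cnj eta * w)) \<le> 1" using norm_moeb_le_1 a rot[OF w] by simp
    thus "cmod (g (moeb (-a) (cnj eta * w))) \<le> 1" by (rule disk_aut_inv_norm_le)
    have "eta * moeb a (f (g (moeb (-a) (cnj eta * w)))) = eta * (cnj eta * w)"
      using disk_aut_right_inverse[OF x] moeb_moeb_neg[OF a rot[OF w]] by simp
    thus "eta * moeb a (f (g (moeb (-a) (cnj eta * w)))) = w"
      using unit_mult_cnj[OF eta] by (simp add: mult.assoc[symmetric])
  qed (use eta Om' B' f comp in \<open>auto simp: norm_mult\<close>)
qed

end

lemma ancestor_parent: "v \<noteq> r \<Longrightarrow> ancestor par r (par v) v"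
  unfolding ancestor_def by (intro exI[of _ 1]) auto

lemma ancestor_of_parent:
  assumes "w \<noteq> r" "ancestor par r v (par w)"
  shows "ancestor par r v w"
proof -
  obtain k where k: "(par ^^ k) (par w) = v" "\<forall>j<k. (par ^^ j) (par w) \<noteq> r"
    using assms(2) unfolding ancestor_def by blast
  have "(par ^^ Suc k) w = v" using k(1) by (simp add: funpow_Suc_right del: funpow.simps)
  moreover have "(par ^^ j) w \<noteq> r" if "j < Suc k" for j
    using that assms(1) k(2) by (cases j) (auto simp: funpow_Suc_right simp del: funpow.simps)
  ultimately show ?thesis unfolding ancestor_def by blast
qed

lemma ancestor_cases:
  assumes "ancestor par r v w"
  shows "w \<noteq> r" and "par w = v \<or> ancestor par r v (par w)"
proof -
  obtain k where k: "k > 0" "(par ^^ k) w = v" "\<forall>j<k. (par ^^ j) w \<noteq> r"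
    using assms unfolding ancestor_def by blast
  show "w \<noteq> r" using k(1,3) by force
  show "par w = v \<or> ancestor par r v (par w)"
  proof (cases "k = 1")
    case True thus ?thesis using k(2) by simp
  next
    case False
    then obtain m where m: "k = Suc m" "m > 0" using k(1) by (cases k) auto
    have "(par ^^ m) (par w) = v" using k(2) m(1) by (simp add: funpow_Suc_right del: funpow.simps)
    moreover have "(par ^^ j) (par w) \<noteq> r" if "j < m" for j
      using that k(3) m(1) by (auto simp: funpow_Suc_right simp del: funpow.simps)
    ultimately show ?thesis using m(2) unfolding ancestor_def by blast
  qed
qed

locale tree_drawing =
  fixes V :: "'a set" and par :: "'a \<Rightarrow> 'a" and r :: 'a
  assumes rooted: "rooted_tree V par r"
begin

lemma finite_V: "finite V"
  and root_in_V: "r \<in> V"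
  and parent_in_V: "v \<in> V \<Longrightarrow> v \<noteq> r \<Longrightarrow> par v \<in> V"
  and reaches_root: "v \<in> V \<Longrightarrow> \<exists>k. (par ^^ k) v = r"
  using rooted unfolding rooted_tree_def by auto

abbreviation leaf :: "'a \<Rightarrow> bool" where "leaf v \<equiv> is_leaf V par r v"

lemma children_iff: "n \<in> children V par r u \<longleftrightarrow> n \<in> V \<and> n \<noteq> r \<and> par n = u"
  unfolding children_def by auto

lemma nbrs_iff: "n \<in> nbrs V par r u \<longleftrightarrow> n \<in> children V par r u \<or> (u \<noteq> r \<and> n = par u)"
  unfolding nbrs_def by auto

lemma child_of_parent: "v \<in> V \<Longrightarrow> v \<noteq> r \<Longrightarrow> v \<in> children V par r (par v)"
  unfolding children_iff by simp

lemma parent_not_leaf: "v \<in> V \<Longrightarrow> v \<noteq> r \<Longrightarrow> \<not> leaf (par v)"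
  unfolding is_leaf_def children_def by auto

lemma parent_not_child:
  assumes "u \<in> V" "u \<noteq> r"
  shows "par u \<notin> children V par r u"
proof
  assume "par u \<in> children V par r u"
  hence "par (par u) = u" "par u \<noteq> r" unfolding children_iff by auto
  hence "(par ^^ k) u \<in> {u, par u}" for k by (induction k) auto
  moreover obtain k where "(par ^^ k) u = r" using reaches_root[OF assms(1)] by blast
  ultimately show False using assms(2) \<open>par u \<noteq> r\<close> by (metis insertE singletonD)
qed

definition depth :: "'a \<Rightarrow> nat" where "depth v = (LEAST k. (par ^^ k) v = r)"

lemma depth_reaches_root: "v \<in> V \<Longrightarrow> (par ^^ depth v) v = r"
  and not_root_below_depth: "v \<in> V \<Longrightarrow> j < depth v \<Longrightarrow> (par ^^ j) v \<noteq> r"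
  using LeastI_ex[OF reaches_root] not_less_Least unfolding depth_def by auto

lemma depth_eqI:
  assumes "(par ^^ k) v = r" "\<And>j. j < k \<Longrightarrow> (par ^^ j) v \<noteq> r"
  shows "depth v = k"
  unfolding depth_def
proof (rule Least_equality)
  show "(par ^^ k) v = r" by fact
  show "k \<le> j" if "(par ^^ j) v = r" for j using assms(2) that not_less by blast
qed

lemma depth_root: "depth r = 0"
  by (rule depth_eqI) auto

lemma depth_eq_0_iff: "v \<in> V \<Longrightarrow> depth v = 0 \<longleftrightarrow> v = r"
  using depth_reaches_root depth_root by fastforce

lemma depth_ancestor:
  assumes "ancestor par r x w" "x \<in> V"
  obtains k where "k > 0" "depth w = k + depth x" "(par ^^ k) w = x"
proof -
  obtain k where k: "k > 0" "(par ^^ k) w = x" "\<And>j. j < k \<Longrightarrow> (par ^^ j) w \<noteq> r"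
    using assms(1) unfolding ancestor_def by blast
  have "depth w = depth x + k"
  proof (rule depth_eqI)
    show "(par ^^ (depth x + k)) w = r"
      using depth_reaches_root[OF assms(2)] k(2) by (simp add: funpow_add)
    show "(par ^^ j) w \<noteq> r" if j: "j < depth x + k" for j
    proof (cases "j < k")
      case False
      hence "(par ^^ j) w = (par ^^ (j - k)) x"
        using k(2) funpow_add[of "j - k" k par] by simp
      thus ?thesis using not_root_below_depth[OF assms(2), of "j - k"] j False by simp
    qed (use k(3) in blast)
  qed
  thus ?thesis using that k(1,2) by (simp add: add.commute)
qed

lemma depth_parent:
  assumes "v \<in> V" "v \<noteq> r"
  shows "depth v = Suc (depth (par v))"
proof -
  obtain m where m: "depth v = Suc m"
    using depth_reaches_root[OF assms(1)] assms(2) by (cases "depth v") auto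
  have "depth (par v) = m"
  proof (rule depth_eqI)
    show "(par ^^ m) (par v) = r"
      using depth_reaches_root[OF assms(1)] m by (simp add: funpow_Suc_right del: funpow.simps)
    show "(par ^^ j) (par v) \<noteq> r" if "j < m" for j
      using not_root_below_depth[OF assms(1), of "Suc j"] that m
      by (simp add: funpow_Suc_right del: funpow.simps)
  qed
  thus ?thesis using m by simp
qed

definition index :: "'a \<Rightarrow> nat" where "index = (SOME h. bij_betw h V {0..<card V})"

definition ang :: "'a \<Rightarrow> real" where
  "ang v = pi / 2 * (real (index v) / real (card V)) - pi / 4"

lemma bij_index: "bij_betw index V {0..<card V}"
  unfolding index_def using someI_ex[OF ex_bij_betw_finite_nat[OF finite_V]] .

lemma ang_bounds:
  assumes "v \<in> V"
  shows "- (pi/4) \<le> ang v" "ang v < pi/4"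
proof -
  have "card V > 0" using finite_V root_in_V card_gt_0_iff by blast
  moreover have "index v < card V" using bij_index assms unfolding bij_betw_def by auto
  ultimately have "0 \<le> real (index v) / real (card V)" "real (index v) / real (card V) < 1"
    by simp_all
  hence "0 \<le> pi / 2 * (real (index v) / real (card V))"
    "pi / 2 * (real (index v) / real (card V)) < pi / 2 * 1"
    using pi_gt_zero by (simp, intro mult_strict_left_mono) auto
  thus "- (pi/4) \<le> ang v" "ang v < pi/4" unfolding ang_def by linarith+
qed

lemma cos_ang_nonneg: "v \<in> V \<Longrightarrow> cos (ang v) \<ge> 0"
  using ang_bounds pi_gt_zero by (intro cos_ge_zero) fastforce+

lemma one_minus_cos_ang_diff_pos:
  assumes "a \<in> V" "b \<in> V" "a \<noteq> b"
  shows "1 - cos (ang a - ang b) > 0"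
proof -
  have "index a \<noteq> index b" using bij_index assms unfolding bij_betw_def inj_on_def by auto
  hence "ang a \<noteq> ang b" using finite_V root_in_V unfolding ang_def by (auto simp: card_gt_0_iff)
  moreover have "\<bar>ang a - ang b\<bar> < pi/2"
    unfolding abs_less_iff using ang_bounds[OF assms(1)] ang_bounds[OF assms(2)] by linarith
  ultimately have "cos \<bar>ang a - ang b\<bar> < cos 0"
    using pi_gt_zero by (intro cos_monotone_0_pi) linarith+
  thus ?thesis by simp
qed

definition gap :: real where
  "gap = Min (insert 1 ((\<lambda>(a, b). 1 - cos (ang a - ang b)) ` {(a, b) \<in> V \<times> V. a \<noteq> b}))"

lemma gap_pos: "0 < gap"
  and gap_le_1: "gap \<le> 1"
  and gap_le: "a \<in> V \<Longrightarrow> b \<in> V \<Longrightarrow> a \<noteq> b \<Longrightarrow> gap \<le> 1 - cos (ang a - ang b)"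
proof -
  have "finite {(a, b) \<in> V \<times> V. a \<noteq> b}"
    using finite_V by (auto intro: finite_subset[of _ "V \<times> V"])
  hence fin: "finite (insert 1 ((\<lambda>(a, b). 1 - cos (ang a - ang b)) ` {(a, b) \<in> V \<times> V. a \<noteq> b}))"
    by simp
  show "0 < gap" unfolding gap_def using fin one_minus_cos_ang_diff_pos by (subst Min_gr_iff) auto
  show "gap \<le> 1" unfolding gap_def using fin by simp
  show "a \<in> V \<Longrightarrow> b \<in> V \<Longrightarrow> a \<noteq> b \<Longrightarrow> gap \<le> 1 - cos (ang a - ang b)"
    unfolding gap_def using fin by (intro Min_le) auto
qed

definition rho :: real where "rho = 1 - gap / 32"

lemma rho_pos: "0 < rho" and rho_less_1: "rho < 1"
  using gap_pos gap_le_1 unfolding rho_def by auto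

text \<open>The frame of \<open>v\<close> is a disk isometry sending \<open>v\<close> to \<open>0\<close> and its parent onto the negative
  real axis; in the frame of its parent, \<open>v\<close> lies at \<open>rho * cis (ang v)\<close>.\<close>

primrec frame_iter :: "nat \<Rightarrow> 'a \<Rightarrow> (complex \<Rightarrow> complex) \<times> (complex \<Rightarrow> complex)" where
  "frame_iter 0 v = (id, id)"
| "frame_iter (Suc n) v =
     ((\<lambda>z. cis (- ang v) * moeb (of_real rho * cis (ang v)) (fst (frame_iter n (par v)) z)),
      (\<lambda>w. snd (frame_iter n (par v)) (moeb (- (of_real rho * cis (ang v))) (cis (ang v) * w))))"

definition frame :: "'a \<Rightarrow> complex \<Rightarrow> complex" where "frame v = fst (frame_iter (depth v) v)"

definition unframe :: "'a \<Rightarrow> complex \<Rightarrow> complex" where "unframe v = snd (frame_iter (depth v) v)"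

lemma disk_automorphism_frame_iter: "disk_automorphism (fst (frame_iter n v)) (snd (frame_iter n v))"
proof (induction n arbitrary: v)
  case 0 show ?case using disk_automorphism_id by (simp add: id_def)
next
  case (Suc n)
  have "cmod (of_real rho * cis (ang v)) < 1" using rho_pos rho_less_1 by (simp add: norm_mult)
  from disk_automorphism_compose[OF Suc.IH this, of "cis (- ang v)"]
  show ?case by (simp add: cis_cnj)
qed

lemma disk_automorphism_frame: "disk_automorphism (frame v) (unframe v)"
  unfolding frame_def unframe_def by (rule disk_automorphism_frame_iter)

lemma frame_root: "frame r = id" "unframe r = id"
  unfolding frame_def unframe_def depth_root by simp_all

lemma frame_parent:
  assumes "v \<in> V" "v \<noteq> r"
  shows "frame v = (\<lambda>z. cis (- ang v) * moeb (of_real rho * cis (ang v)) (frame (par v) z))"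
    and "unframe v = (\<lambda>w. unframe (par v) (moeb (- (of_real rho * cis (ang v))) (cis (ang v) * w)))"
  unfolding frame_def unframe_def depth_parent[OF assms] by simp_all

definition anchor :: "'a \<Rightarrow> complex" where
  "anchor v = of_real (if leaf v then 1 else rho) * cis (ang v)"

definition pos :: "'a \<Rightarrow> complex" where
  "pos v = (if v = r then (if leaf r then 1 else 0) else unframe (par v) (anchor v))"

text \<open>Direction of the edge from \<open>u\<close> to its neighbour \<open>n\<close>, as seen in the frame of \<open>u\<close>.\<close>

definition nbr_dir :: "'a \<Rightarrow> 'a \<Rightarrow> complex" where
  "nbr_dir u n = (if n \<in> children V par r u then cis (ang n) else -1)"

lemma norm_anchor: "cmod (anchor v) \<le> 1" "leaf v \<Longrightarrow> cmod (anchor v) = 1"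
  "\<not> leaf v \<Longrightarrow> cmod (anchor v) < 1"
  using rho_pos rho_less_1 unfolding anchor_def by (auto simp: norm_mult)

lemma anchor_scaled: "\<exists>s>0. anchor v = of_real s * cis (ang v)"
  using rho_pos unfolding anchor_def by (intro exI[of _ "if leaf v then 1 else rho"]) auto

lemma pos_not_leaf: "v \<in> V \<Longrightarrow> \<not> leaf v \<Longrightarrow> pos v = unframe v 0"
  by (cases "v = r")
    (auto simp: pos_def frame_root anchor_def frame_parent moeb_def)

lemma frame_pos_self: "v \<in> V \<Longrightarrow> \<not> leaf v \<Longrightarrow> frame v (pos v) = 0"
  using pos_not_leaf disk_aut_right_inverse[OF disk_automorphism_frame, of 0] by simp

lemma frame_pos_child: "v \<in> V \<Longrightarrow> v \<noteq> r \<Longrightarrow> frame (par v) (pos v) = anchor v"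
  using disk_aut_right_inverse[OF disk_automorphism_frame norm_anchor(1)] by (simp add: pos_def)

lemma norm_pos_leaf: "v \<in> V \<Longrightarrow> leaf v \<Longrightarrow> cmod (pos v) = 1"
  and norm_pos_not_leaf: "v \<in> V \<Longrightarrow> \<not> leaf v \<Longrightarrow> cmod (pos v) < 1"
  using disk_aut_inv_norm_eq[OF disk_automorphism_frame norm_anchor(2)]
    disk_aut_inv_norm_less[OF disk_automorphism_frame norm_anchor(3)]
  by (auto simp: pos_def)

lemma norm_pos_le_1: "v \<in> V \<Longrightarrow> cmod (pos v) \<le> 1"
  using norm_pos_leaf[of v] norm_pos_not_leaf[of v] by (cases "leaf v") auto

lemma frame_pos_parent:
  assumes "v \<in> V" "v \<noteq> r"
  shows "frame v (pos (par v)) = - of_real rho"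
proof -
  have "frame (par v) (pos (par v)) = 0"
    using frame_pos_self parent_in_V parent_not_leaf assms by blast
  hence "frame v (pos (par v)) = cis (- ang v) * moeb (of_real rho * cis (ang v)) 0"
    unfolding frame_parent[OF assms] by simp
  also have "\<dots> = - of_real rho * (cis (- ang v) * cis (ang v))"
    by (simp add: moeb_def algebra_simps)
  finally show ?thesis by (simp add: cis_mult)
qed

lemma nbr_in_V: "u \<in> V \<Longrightarrow> n \<in> nbrs V par r u \<Longrightarrow> n \<in> V"
  using parent_in_V unfolding nbrs_iff children_iff by auto

lemma norm_nbr_dir: "cmod (nbr_dir u n) = 1"
  unfolding nbr_dir_def by simp

lemma nbr_dir_child: "v \<in> children V par r u \<Longrightarrow> nbr_dir u v = cis (ang v)"
  unfolding nbr_dir_def by simp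

lemma nbr_dir_parent: "u \<in> V \<Longrightarrow> u \<noteq> r \<Longrightarrow> nbr_dir u (par u) = -1"
  using parent_not_child unfolding nbr_dir_def by simp

lemma frame_pos_nbr:
  assumes "u \<in> V" "n \<in> nbrs V par r u"
  obtains s where "s > 0" "frame u (pos n) = of_real s * nbr_dir u n"
proof (cases "n \<in> children V par r u")
  case True
  hence "frame u (pos n) = anchor n" using frame_pos_child unfolding children_iff by auto
  thus ?thesis using anchor_scaled[of n] True that unfolding nbr_dir_def by auto
next
  case False
  hence "u \<noteq> r" "n = par u" using assms(2) unfolding nbrs_iff by auto
  hence "frame u (pos n) = of_real rho * nbr_dir u n"
    using frame_pos_parent[OF assms(1)] nbr_dir_parent[OF assms(1)] by simp
  thus ?thesis using rho_pos that by blast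
qed

text \<open>The edge to the parent, in direction \<open>-1\<close>, is covered because \<open>cos (ang v) \<ge> 0\<close>.\<close>

lemma gap_le_nbr_dir:
  assumes v: "v \<in> children V par r u" and n: "n \<in> nbrs V par r u" "n \<noteq> v"
  shows "gap \<le> 1 - Re (nbr_dir u n * cnj (cis (ang v)))"
proof (cases "n \<in> children V par r u")
  case True
  hence "nbr_dir u n * cnj (cis (ang v)) = cis (ang n - ang v)"
    by (simp add: nbr_dir_def cis_cnj cis_mult)
  thus ?thesis using gap_le[of n v] True v n(2) unfolding children_iff by simp
next
  case False
  hence "nbr_dir u n = -1" unfolding nbr_dir_def by simp
  moreover have "v \<in> V" using v unfolding children_iff by simp
  ultimately show ?thesis using gap_le_1 cos_ang_nonneg[of v] by (simp add: cis_cnj)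
qed

lemma hangle_frame:
  assumes u: "u \<in> V" "\<not> leaf u" and n: "n \<in> nbrs V par r u" and p: "cmod p \<le> 1"
  shows "hangle (pos u) p (pos n) = vangle (frame u p) (nbr_dir u n)"
proof -
  obtain s where s: "s > 0" "frame u (pos n) = of_real s * nbr_dir u n"
    using frame_pos_nbr[OF u(1) n] .
  have "hangle (pos u) p (pos n) = vangle (frame u p) (frame u (pos n))"
    unfolding pos_not_leaf[OF u]
    using disk_aut_hangle[OF disk_automorphism_frame p norm_pos_le_1[OF nbr_in_V[OF u(1) n]]] .
  also have "\<dots> = vangle (frame u p) (nbr_dir u n)" using s vangle_scale_right by simp
  finally show ?thesis .
qed

lemma hangle_less_iff_frame:
  assumes u: "u \<in> V" "\<not> leaf u" and v: "v \<in> nbrs V par r u" and n: "n \<in> nbrs V par r u"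
    and p: "cmod p \<le> 1" "frame u p \<noteq> 0"
  shows "hangle (pos u) p (pos v) < hangle (pos u) p (pos n) \<longleftrightarrow>
    Re (frame u p * cnj (nbr_dir u n)) < Re (frame u p * cnj (nbr_dir u v))"
  unfolding hangle_frame[OF u v p(1)] hangle_frame[OF u n p(1)]
  using vangle_less_iff[OF p(2) norm_nbr_dir norm_nbr_dir] .

lemma dom_region_iff:
  assumes v: "v \<in> V" "v \<noteq> r"
  shows "p \<in> dom_region V par r pos v \<longleftrightarrow> cmod p < 1 \<and> frame (par v) p \<noteq> 0 \<and>
    (\<forall>n \<in> nbrs V par r (par v) - {v}.
       Re (frame (par v) p * cnj (nbr_dir (par v) n)) < Re (frame (par v) p * cnj (cis (ang v))))"
proof -
  have u: "par v \<in> V" "\<not> leaf (par v)" using parent_in_V parent_not_leaf v by auto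
  have vu: "v \<in> children V par r (par v)" using child_of_parent v .
  hence "v \<in> nbrs V par r (par v)" unfolding nbrs_iff by simp
  moreover have "p = pos (par v) \<longleftrightarrow> frame (par v) p = 0" if "cmod p < 1" for p
    using disk_aut_eq_0_iff[OF disk_automorphism_frame] pos_not_leaf[OF u] that by simp
  ultimately show ?thesis
    unfolding dom_region_def nbr_dir_child[OF vu, symmetric] using hangle_less_iff_frame[OF u]
    by (auto simp: less_imp_le)
qed

lemma hyp_drawing_pos: "hyp_drawing V par r pos"
  unfolding hyp_drawing_def
proof (intro conjI ballI)
  fix v assume "v \<in> V"
  thus "if leaf v then cmod (pos v) = 1 else cmod (pos v) < 1"
    using norm_pos_leaf norm_pos_not_leaf by simp
next
  fix v assume "v \<in> V - {r}"
  hence v: "v \<in> V" "v \<noteq> r" by auto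
  have u: "par v \<in> V" "\<not> leaf (par v)" using parent_in_V parent_not_leaf v by auto
  have vu: "v \<in> children V par r (par v)" using child_of_parent v .
  have "anchor v \<noteq> 0" using rho_pos unfolding anchor_def by auto
  thus "pos v \<noteq> pos (par v)"
    using frame_pos_child[OF v] frame_pos_self[OF u] by auto
  fix n assume n: "n \<in> nbrs V par r (par v) - {v}"
  obtain s where s: "s > 0" "anchor v = of_real s * cis (ang v)" using anchor_scaled by blast
  have angle: "hangle (pos (par v)) (pos v) (pos n) = vangle (cis (ang v)) (nbr_dir (par v) n)"
    using hangle_frame[OF u _ norm_pos_le_1[OF v(1)]] n
    unfolding frame_pos_child[OF v] s(2) vangle_scale_left[OF s(1)] by simp
  have "Re (cis (ang v) * cnj (nbr_dir (par v) n))
      = Re (nbr_dir (par v) n * cnj (cis (ang v)))"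
    by (simp add: algebra_simps)
  moreover have "gap \<le> 1 - Re (nbr_dir (par v) n * cnj (cis (ang v)))"
    using gap_le_nbr_dir[OF vu] n by blast
  ultimately have "Re (cis (ang v) * cnj (nbr_dir (par v) n)) < 1"
    using gap_pos by linarith
  thus "hangle (pos (par v)) (pos v) (pos n) > 0"
    using vangle_pos[OF _ norm_nbr_dir] angle by simp
qed

lemma frame_parent_eq:
  assumes v: "v \<in> V" "v \<noteq> r" and p: "cmod p \<le> 1"
  shows "frame (par v) p
    = cis (ang v) * ((frame v p + of_real rho) / (1 + of_real rho * frame v p))"
proof -
  let ?x = "frame (par v) p" and ?z = "frame v p" and ?t = "ang v"
  have x1: "cmod ?x \<le> 1" using disk_aut_norm_le[OF disk_automorphism_frame p] .
  have "?z = cis (- ?t) * moeb (of_real rho * cis ?t) ?x" using frame_parent(1)[OF v] by simp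
  hence "cis ?t * ?z = (cis ?t * cis (- ?t)) * moeb (of_real rho * cis ?t) ?x" by (simp only: mult.assoc)
  hence mz: "moeb (of_real rho * cis ?t) ?x = cis ?t * ?z" by (simp add: cis_mult)
  have "cmod (of_real rho * cis ?t) < 1" using rho_pos rho_less_1 by (simp add: norm_mult)
  hence "?x = moeb (- (of_real rho * cis ?t)) (moeb (of_real rho * cis ?t) ?x)"
    using moeb_neg_moeb x1 by simp
  also have "\<dots> = moeb (- (of_real rho * cis ?t)) (cis ?t * ?z)" using mz by simp
  also have "\<dots> = (cis ?t * ?z + of_real rho * cis ?t)
      / (1 + of_real rho * (cnj (cis ?t) * cis ?t) * ?z)"
    unfolding moeb_def by (simp add: algebra_simps)
  also have "cnj (cis ?t) * cis ?t = 1" by (simp add: cis_cnj cis_mult)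
  also have "cis ?t * ?z + of_real rho * cis ?t = cis ?t * (?z + of_real rho)"
    by (simp add: algebra_simps)
  finally show ?thesis by simp
qed

text \<open>Seen from \<open>v\<close>, the region of a child \<open>w\<close> is the set of points closer in angle to the
  direction of \<open>w\<close> than to the direction \<open>-1\<close> of the parent, so it stays away from \<open>-1\<close>.\<close>

lemma dom_region_child_away_from_parent:
  assumes v: "v \<in> V" "v \<noteq> r" and w: "w \<in> children V par r v"
    and p: "p \<in> dom_region V par r pos w"
  shows "cmod (1 + frame v p) > 1/2"
proof -
  have w': "w \<in> V" "w \<noteq> r" "par w = v" using w unfolding children_iff by auto
  have "par v \<in> nbrs V par r v - {w}"
    using parent_not_child[OF v] w v by (auto simp: nbrs_iff)
  hence "Re (frame v p * cnj (nbr_dir v (par v))) < Re (frame v p * cnj (cis (ang w)))"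
    using p dom_region_iff[OF w'(1,2)] w'(3) by auto
  hence "Re (frame v p * (cnj (cis (ang w)) + 1)) > 0"
    unfolding nbr_dir_parent[OF v] by (simp add: distrib_left)
  thus ?thesis by (rule norm_one_plus_gt_half[rotated 2]) (use cos_ang_nonneg[OF w'(1)] in auto)
qed

lemma dom_region_child_subset:
  assumes v: "v \<in> V" "v \<noteq> r" and w: "w \<in> children V par r v"
  shows "dom_region V par r pos w \<subseteq> dom_region V par r pos v"
proof
  fix p assume p: "p \<in> dom_region V par r pos w"
  have w': "w \<in> V" "w \<noteq> r" "par w = v" using w unfolding children_iff by auto
  have p1: "cmod p < 1" using p dom_region_iff[OF w'(1,2)] by blast
  let ?u = "par v" and ?z = "frame v p"
  define W where "W = (?z + of_real rho) / (1 + of_real rho * ?z)"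
  have x: "frame ?u p = cis (ang v) * W"
    unfolding W_def using frame_parent_eq[OF v] p1 by simp
  have T: "rho = 1 - gap / 32" "0 < gap" "gap \<le> 1" using gap_pos gap_le_1 rho_def by auto
  have z: "cmod ?z < 1" "cmod (1 + ?z) > 1/2"
    using disk_aut_norm_less[OF disk_automorphism_frame p1]
      dom_region_child_away_from_parent[OF v w p] by auto
  note estimate = translation_estimate[OF T z, folded W_def]
  show "p \<in> dom_region V par r pos v"
    unfolding dom_region_iff[OF v]
  proof (intro conjI ballI)
    show "cmod p < 1" by (rule p1)
    show "frame ?u p \<noteq> 0" using x estimate(1) by auto
    fix n assume n: "n \<in> nbrs V par r ?u - {v}"
    define f where "f = nbr_dir ?u n * cnj (cis (ang v))"
    have "cmod f = 1" unfolding f_def by (simp add: norm_mult norm_nbr_dir)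
    moreover have "gap \<le> 1 - Re f"
      unfolding f_def using gap_le_nbr_dir[OF child_of_parent[OF v]] n by auto
    ultimately have "Re (W * (1 - cnj f)) > 0" by (rule estimate(2))
    moreover have "frame ?u p * cnj (cis (ang v)) = W"
      unfolding x by (simp add: cis_cnj cis_mult mult.commute mult.left_commute)
    moreover have "frame ?u p * cnj (nbr_dir ?u n) = W * cnj f"
      unfolding x f_def by (simp add: algebra_simps)
    ultimately show "Re (frame ?u p * cnj (nbr_dir ?u n)) < Re (frame ?u p * cnj (cis (ang v)))"
      by (simp add: right_diff_distrib)
  qed
qed

lemma dom_region_ancestor_subset:
  assumes "w \<in> V" "v \<noteq> r" "ancestor par r v w"
  shows "dom_region V par r pos w \<subseteq> dom_region V par r pos v"
  using assms
proof (induction "depth w" arbitrary: w rule: less_induct)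
  case less
  have w: "w \<noteq> r" using ancestor_cases(1)[OF less.prems(3)] .
  have pw: "par w \<in> V" using parent_in_V less.prems(1) w by blast
  have sub: "dom_region V par r pos w \<subseteq> dom_region V par r pos (par w)" if "par w \<noteq> r"
    using dom_region_child_subset[OF pw that] child_of_parent[OF less.prems(1) w] .
  from ancestor_cases(2)[OF less.prems(3)] show ?case
  proof
    assume "par w = v" thus ?thesis using sub less.prems(2) by blast
  next
    assume anc: "ancestor par r v (par w)"
    have "depth (par w) < depth w" using depth_parent[OF less.prems(1) w] by simp
    hence "dom_region V par r pos (par w) \<subseteq> dom_region V par r pos v"
      using less.hyps pw less.prems(2) anc by blast
    thus ?thesis using sub ancestor_cases(1)[OF anc] by blast
  qed
qed

lemma dom_region_siblings_disjoint:
  assumes a: "a \<in> V" "a \<noteq> r" and b: "b \<in> V" "b \<noteq> r" and "a \<noteq> b" "par a = par b"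
  shows "dom_region V par r pos a \<inter> dom_region V par r pos b = {}"
proof -
  have nbrs: "b \<in> nbrs V par r (par a) - {a}" "a \<in> nbrs V par r (par b) - {b}"
    and dirs: "nbr_dir (par a) b = cis (ang b)" "nbr_dir (par b) a = cis (ang a)"
    using assms by (auto simp: nbrs_iff nbr_dir_def children_iff)
  have False if "p \<in> dom_region V par r pos a" "p \<in> dom_region V par r pos b" for p
  proof -
    have "Re (frame (par a) p * cnj (nbr_dir (par a) b)) < Re (frame (par a) p * cnj (cis (ang a)))"
      using that(1) nbrs(1) unfolding dom_region_iff[OF a] by blast
    moreover have "Re (frame (par b) p * cnj (nbr_dir (par b) a)) < Re (frame (par b) p * cnj (cis (ang b)))"
      using that(2) nbrs(2) unfolding dom_region_iff[OF b] by blast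
    ultimately show False unfolding dirs using \<open>par a = par b\<close> by simp
  qed
  thus ?thesis by blast
qed

lemma ancestor_parent_of_not_deeper:
  assumes a: "a \<in> V" "a \<noteq> r" and anc: "ancestor par r (par a) b" and "depth b \<le> depth a"
  shows "par b = par a"
proof -
  obtain k where k: "k > 0" "depth b = k + depth (par a)" "(par ^^ k) b = par a"
    using depth_ancestor[OF anc parent_in_V[OF a]] .
  have "k = 1" using k(1,2) depth_parent[OF a] \<open>depth b \<le> depth a\<close> by simp
  thus ?thesis using k(3) by simp
qed

lemma unrelated_parent_of_deeper:
  assumes a: "a \<in> V" "a \<noteq> r" and b: "b \<in> V" "b \<noteq> r"
    and not_anc: "\<not> ancestor par r b a" and deeper: "depth b \<le> depth a"
    and ne: "par a \<noteq> par b"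
  shows "par a \<noteq> r" "par a \<noteq> b" "\<not> ancestor par r b (par a)" "\<not> ancestor par r (par a) b"
proof -
  show "par a \<noteq> r"
  proof
    assume "par a = r"
    hence "depth b = 1" using depth_parent[OF a] depth_parent[OF b] depth_root deeper by simp
    hence "par b = r" using depth_parent[OF b] depth_eq_0_iff parent_in_V[OF b] by simp
    thus False using ne \<open>par a = r\<close> by simp
  qed
  show "par a \<noteq> b" using ancestor_parent[OF a(2)] not_anc by blast
  show "\<not> ancestor par r b (par a)" using ancestor_of_parent[OF a(2)] not_anc by blast
  show "\<not> ancestor par r (par a) b" using ancestor_parent_of_not_deeper[OF a] deeper ne by metis
qed

lemma dom_region_disjoint:
  assumes "v \<in> V" "v \<noteq> r" "w \<in> V" "w \<noteq> r" "v \<noteq> w"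
    and "\<not> ancestor par r v w" "\<not> ancestor par r w v"
  shows "dom_region V par r pos v \<inter> dom_region V par r pos w = {}"
  using assms
proof (induction "depth v + depth w" arbitrary: v w rule: less_induct)
  case less
  have deeper: "dom_region V par r pos a \<inter> dom_region V par r pos b = {}"
    if a: "a \<in> V" "a \<noteq> r" and b: "b \<in> V" "b \<noteq> r" and "a \<noteq> b"
      and "\<not> ancestor par r a b" "\<not> ancestor par r b a"
      and "{a, b} = {v, w}" and "depth b \<le> depth a" for a b
  proof (cases "par a = par b")
    case True thus ?thesis using dom_region_siblings_disjoint a b \<open>a \<noteq> b\<close> by blast
  next
    case False
    note climb = unrelated_parent_of_deeper[OF a b \<open>\<not> ancestor par r b a\<close> \<open>depth b \<le> depth a\<close> False]
    have pa: "par a \<in> V" using parent_in_V a by blast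
    have "depth (par a) + depth b < depth v + depth w"
      using depth_parent[OF a] \<open>{a, b} = {v, w}\<close> \<open>a \<noteq> b\<close> by (auto simp: doubleton_eq_iff)
    hence "dom_region V par r pos (par a) \<inter> dom_region V par r pos b = {}"
      using less.hyps pa b climb by blast
    moreover have "dom_region V par r pos a \<subseteq> dom_region V par r pos (par a)"
      using dom_region_child_subset[OF pa climb(1) child_of_parent[OF a]] .
    ultimately show ?thesis by blast
  qed
  show ?case
  proof (cases "depth w \<le> depth v")
    case True thus ?thesis using deeper less.prems by blast
  next
    case False thus ?thesis using deeper[of w v] less.prems by (auto simp: insert_commute)
  qed
qed

lemma good_hyp_drawing_pos: "good_hyp_drawing V par r pos"
  unfolding good_hyp_drawing_def
  using hyp_drawing_pos dom_region_ancestor_subset dom_region_disjoint by auto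

end

theorem lemma2:
  fixes V :: "'a set" and par :: "'a \<Rightarrow> 'a" and r :: 'a
  assumes "rooted_tree V par r"
  shows "\<exists>pos. good_hyp_drawing V par r pos"
proof -
  interpret tree_drawing V par r using assms by unfold_locales
  show ?thesis using good_hyp_drawing_pos by blast
qed

end
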